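(* Let $\Omega$ be a finite set with $n$ elements, let $G \le \mathrm{Sym}(\Omega)$ be $t$-transitive with $t \geq 2$, let $u \in G$, $m = |\mathrm{supp}(u)|$, $\Delta \subseteq \mathrm{supp}(u)$, and $E = \{g^{-1} u g \mid g \in G_{(\Delta)}\}$. Then: (i) If $|\Delta| \le t-1$, then for every $\gamma \in \Omega \setminus \Delta$, $$|\{x \in E \mid \gamma^x = \gamma\}| = |E| \frac{n -m}{n-|\Delta|},\qquad |\{x \in E \mid \gamma^x \ne \gamma\}| = |E| \frac{m-|\Delta|}{n-|\Delta|}.$$ (ii) If $|\Delta| \le t-2$, then for all $\gamma, \delta \in \Omega \setminus \Delta$ with $\gamma \ne \delta$, $$|\{x \in E \mid \gamma \in \mathrm{fix}(x), \delta \in \mathrm{supp}(x)\}| = |E| \frac{(n-m)(m-|\Delta|)}{(n-|\Delta|)(n- |\Delta|-1)}.$$ (iii) If $|\Delta|=1$, then for all $\gamma \in \Omega \setminus \Delta$, $$|\{x \in E \mid \gamma^x \in \Delta \}| = |E| \frac{1}{n-1}.$$ (iv) If $|\Delta|=1$ and $t \ge 3$, then for all $\gamma, \delta \in \Omega \setminus \Delta$ with $\gamma \ne \delta$, $$|\{x\in E \mid \gamma^x = \delta\}| = |E|\frac{m-2}{(n-1)(n-2)}.$$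
   Context: Permutations act on the right, $\alpha\mapsto\alpha^x$. For $x\in\mathrm{Sym}(\Omega)$, $\mathrm{supp}(x)=\{\alpha\mid\alpha^x\ne\alpha\}$ and $\mathrm{fix}(x)=\{\alpha\mid\alpha^x=\alpha\}$. $G$ is $t$-transitive if it acts transitively on the set of ordered $t$-tuples of distinct points of $\Omega$. $G_{(\Delta)}$ denotes the pointwise stabilizer of $\Delta$ in $G$. *)

theory Defs
  imports Complex_Main "HOL-Combinatorics.Permutations"
begin

text \<open>Permutations are functions; the right action alpha^x is written x alpha,
  so the product x y (first x, then y) is the function y o x, and
  g^-1 u g is the function g o u o inv g.\<close>

definition perm_supp :: "('a \<Rightarrow> 'a) \<Rightarrow> 'a set" where
  "perm_supp x = {a. x a \<noteq> a}"

definition perm_fix :: "'a set \<Rightarrow> ('a \<Rightarrow> 'a) \<Rightarrow> 'a set" where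
  "perm_fix \<Omega> x = {a \<in> \<Omega>. x a = a}"

definition perm_group :: "'a set \<Rightarrow> ('a \<Rightarrow> 'a) set \<Rightarrow> bool" where
  "perm_group \<Omega> G \<longleftrightarrow> G \<subseteq> {p. p permutes \<Omega>} \<and> id \<in> G \<and>
     (\<forall>p\<in>G. \<forall>q\<in>G. p \<circ> q \<in> G) \<and> (\<forall>p\<in>G. inv p \<in> G)"

text \<open>t-transitivity (with the usual implicit convention t \<le> |Omega|).\<close>
definition t_transitive :: "nat \<Rightarrow> 'a set \<Rightarrow> ('a \<Rightarrow> 'a) set \<Rightarrow> bool" where
  "t_transitive t \<Omega> G \<longleftrightarrow> t \<le> card \<Omega> \<and>
     (\<forall>xs ys. distinct xs \<and> distinct ys \<and> length xs = t \<and> length ys = t \<and>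
        set xs \<subseteq> \<Omega> \<and> set ys \<subseteq> \<Omega> \<longrightarrow> (\<exists>g\<in>G. map g xs = ys))"

definition pw_stab :: "('a \<Rightarrow> 'a) set \<Rightarrow> 'a set \<Rightarrow> ('a \<Rightarrow> 'a) set" where
  "pw_stab G \<Delta> = {g \<in> G. \<forall>d\<in>\<Delta>. g d = d}"

end

theory Submission
  imports Defs
begin

text \<open>Let H be the pointwise stabiliser of \<Delta>. The set E is closed under conjugation by H,
  and conjugating by h \<in> H carries an element fixing (moving) \<gamma> to one fixing (moving) h \<gamma>.
  When |\<Delta>| < t, H is transitive on \<Omega> - \<Delta>, so the number of x \<in> E with a given
  property at \<gamma> does not depend on \<gamma>; double counting the pairs (x, \<gamma>) then turns it into
  |E| times the number of suitable \<gamma> for a single x, which is the same for all x because every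
  conjugate moves all of \<Delta> and has m moved points.
  Part (ii) runs this argument on the elements of E fixing \<gamma>, acted on by the stabiliser of
  \<Delta> \<union> {\<gamma>}; part (iv) does the same for the elements mapping \<gamma> outside \<Delta> \<union> {\<gamma>},
  whose number is the difference of the counts in (i) and (iii).\<close>

definition transitive_on :: "('a \<Rightarrow> 'a) set \<Rightarrow> 'a set \<Rightarrow> bool" where
  "transitive_on H X \<longleftrightarrow> (\<forall>a\<in>X. \<forall>b\<in>X. \<exists>h\<in>H. h a = b)"

lemma inj_conj:
  assumes "bij h"
  shows "inj (\<lambda>x. h \<circ> x \<circ> inv h)"
proof (rule injI)
  fix x y assume "h \<circ> x \<circ> inv h = h \<circ> y \<circ> inv h"
  then have "inv h \<circ> (h \<circ> x \<circ> inv h) \<circ> h = inv h \<circ> (h \<circ> y \<circ> inv h) \<circ> h" by simp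
  then show "x = y"
    using assms by (simp add: o_assoc bij_is_inj bij_is_surj surj_iff[THEN iffD1])
qed

lemma perm_supp_conj:
  assumes "bij h"
  shows "perm_supp (h \<circ> x \<circ> inv h) = h ` perm_supp x"
proof (rule set_eqI)
  fix a
  obtain b where a: "a = h b" using assms by (meson bij_pointE)
  have "a \<in> perm_supp (h \<circ> x \<circ> inv h) \<longleftrightarrow> x b \<noteq> b"
    using assms by (simp add: a perm_supp_def bij_is_inj inj_eq)
  also have "\<dots> \<longleftrightarrow> a \<in> h ` perm_supp x"
    using assms by (simp add: a perm_supp_def bij_is_inj inj_image_mem_iff)
  finally show "a \<in> perm_supp (h \<circ> x \<circ> inv h) \<longleftrightarrow> a \<in> h ` perm_supp x" .
qed

lemma card_filter_conj_invariant:
  fixes E :: "('a \<Rightarrow> 'a) set"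
  assumes "finite E" "finite X" "y \<in> X"
    and trans: "transitive_on H X"
    and bij: "\<And>h. h \<in> H \<Longrightarrow> bij h"
    and closed: "\<And>h x. h \<in> H \<Longrightarrow> x \<in> E \<Longrightarrow> h \<circ> x \<circ> inv h \<in> E"
    and invariant: "\<And>h x a. h \<in> H \<Longrightarrow> x \<in> E \<Longrightarrow> a \<in> X \<Longrightarrow> P x a \<Longrightarrow> P (h \<circ> x \<circ> inv h) (h a)"
    and count: "\<And>x. x \<in> E \<Longrightarrow> card {a \<in> X. P x a} = c"
  shows "real (card {x \<in> E. P x y}) = real (card E) * real c / real (card X)"
proof -
  have le: "card {x \<in> E. P x a} \<le> card {x \<in> E. P x b}" if a: "a \<in> X" and b: "b \<in> X" for a b
  proof -
    obtain h where h: "h \<in> H" "h a = b" using trans a b unfolding transitive_on_def by blast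
    have "inj_on (\<lambda>x. h \<circ> x \<circ> inv h) {x \<in> E. P x a}"
      using inj_conj[OF bij[OF h(1)]] by (simp add: inj_on_def inj_def)
    moreover have "(\<lambda>x. h \<circ> x \<circ> inv h) ` {x \<in> E. P x a} \<subseteq> {x \<in> E. P x b}"
      using closed[OF h(1)] invariant[OF h(1) _ \<open>a \<in> X\<close>] h(2) by auto
    ultimately show ?thesis using \<open>finite E\<close> by (intro card_inj_on_le) auto
  qed
  have "card {x \<in> E. P x a} = card {x \<in> E. P x y}" if "a \<in> X" for a
    using le[OF that \<open>y \<in> X\<close>] le[OF \<open>y \<in> X\<close> that] by (rule order_antisym)
  then have "card X * card {x \<in> E. P x y} = (\<Sum>a\<in>X. card {x \<in> E. P x a})"
    by simp
  also have "\<dots> = card E * c"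
    using count sum_multicount[OF \<open>finite X\<close> \<open>finite E\<close>, of "\<lambda>a x. P x a" c]
    by (simp add: mult.commute)
  finally have "real (card X) * real (card {x \<in> E. P x y}) = real (card E) * real c"
    unfolding of_nat_mult[symmetric] by (rule arg_cong)
  moreover have "card X > 0" using \<open>finite X\<close> \<open>y \<in> X\<close> by (auto simp: card_gt_0_iff)
  ultimately show ?thesis by (simp add: field_simps)
qed

lemma exists_distinct_list:
  assumes "finite A" "k \<le> card A"
  shows "\<exists>zs. distinct zs \<and> set zs \<subseteq> A \<and> length zs = k"
proof -
  obtain B where "B \<subseteq> A" "card B = k" using assms(2) by (meson obtain_subset_with_card_n)
  moreover obtain zs where "set zs = B" "distinct zs"
    using finite_distinct_list finite_subset[OF \<open>B \<subseteq> A\<close> assms(1)] by blast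
  ultimately show ?thesis using distinct_card by metis
qed

lemma t_transitive_map_shorter:
  assumes "finite \<Omega>" and tt: "t_transitive t \<Omega> G"
    and "distinct xs" "distinct ys" "set xs \<subseteq> \<Omega>" "set ys \<subseteq> \<Omega>"
    and len: "length xs = length ys" "length xs \<le> t"
  shows "\<exists>g\<in>G. map g xs = ys"
proof -
  have t: "t \<le> card \<Omega>" using tt by (simp add: t_transitive_def)
  have rest: "t - length zs \<le> card (\<Omega> - set zs)" if "distinct zs" "set zs \<subseteq> \<Omega>" for zs
    using that t \<open>finite \<Omega>\<close> by (simp add: card_Diff_subset distinct_card)
  obtain xs' where xs': "distinct xs'" "set xs' \<subseteq> \<Omega> - set xs" "length xs' = t - length xs"
    using exists_distinct_list[OF _ rest] assms by blast
  obtain ys' where ys': "distinct ys'" "set ys' \<subseteq> \<Omega> - set ys" "length ys' = t - length ys"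
    using exists_distinct_list[OF _ rest] assms by blast
  have "distinct (xs @ xs')" "distinct (ys @ ys')" "set (xs @ xs') \<subseteq> \<Omega>" "set (ys @ ys') \<subseteq> \<Omega>"
    "length (xs @ xs') = t" "length (ys @ ys') = t"
    using xs' ys' assms by auto
  then obtain g where "g \<in> G" "map g (xs @ xs') = ys @ ys'"
    using tt unfolding t_transitive_def by blast
  then show ?thesis using len(1) by (auto simp: append_eq_append_conv)
qed

lemma transitive_on_pw_stab:
  assumes "finite \<Omega>" "t_transitive t \<Omega> G" "D \<subseteq> \<Omega>" "card D < t"
  shows "transitive_on (pw_stab G D) (\<Omega> - D)"
  unfolding transitive_on_def
proof (intro ballI)
  fix a b assume a: "a \<in> \<Omega> - D" and b: "b \<in> \<Omega> - D"
  obtain xs where xs: "set xs = D" "distinct xs"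
    using finite_distinct_list finite_subset[OF assms(3,1)] by blast
  obtain g where g: "g \<in> G" "map g (xs @ [a]) = xs @ [b]"
    using t_transitive_map_shorter[OF assms(1,2), of "xs @ [a]" "xs @ [b]"] xs a b assms(3,4)
    by (auto simp: distinct_card)
  then have "map g xs = map id xs" by simp
  then have "\<forall>d\<in>D. g d = d" using xs(1) map_eq_conv[of g xs id] by simp
  then show "\<exists>h\<in>pw_stab G D. h a = b" using g by (auto simp: pw_stab_def)
qed

lemma pw_stab_antimono: "D \<subseteq> D' \<Longrightarrow> pw_stab G D' \<subseteq> pw_stab G D"
  by (auto simp: pw_stab_def)

lemma perm_supp_subset: "x permutes \<Omega> \<Longrightarrow> perm_supp x \<subseteq> \<Omega>"
  by (auto simp: perm_supp_def permutes_def)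

locale permutation_group =
  fixes \<Omega> :: "'a set" and G :: "('a \<Rightarrow> 'a) set"
  assumes group: "perm_group \<Omega> G"
begin

lemma pw_stab_permutes: "h \<in> pw_stab G D \<Longrightarrow> h permutes \<Omega>"
  using group by (auto simp: perm_group_def pw_stab_def)

lemma pw_stab_bij: "h \<in> pw_stab G D \<Longrightarrow> bij h"
  using pw_stab_permutes permutes_bij by blast

lemma pw_stab_inj: "h \<in> pw_stab G D \<Longrightarrow> inj h"
  using pw_stab_bij bij_is_inj by blast

lemma pw_stab_inv_apply: "h \<in> pw_stab G D \<Longrightarrow> inv h (h a) = a"
  using pw_stab_inj by (rule inv_f_f)

lemma pw_stab_conj_apply_fixed:
  "h \<in> pw_stab G D \<Longrightarrow> b \<in> D \<Longrightarrow> (h \<circ> x \<circ> inv h) b = h (x b)"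
  using pw_stab_inv_apply[of h D b] by (simp add: pw_stab_def)

lemma pw_stab_image_mem_iff: "h \<in> pw_stab G D \<Longrightarrow> h a \<in> D \<longleftrightarrow> a \<in> D"
  using pw_stab_inj[of h D] by (auto simp: pw_stab_def inj_eq)

lemma pw_stab_comp: "g \<in> pw_stab G D \<Longrightarrow> h \<in> pw_stab G D \<Longrightarrow> g \<circ> h \<in> pw_stab G D"
  using group by (auto simp: perm_group_def pw_stab_def)

end

locale stabilizer_conjugates = permutation_group +
  fixes u :: "'a \<Rightarrow> 'a" and \<Delta> :: "'a set"
  assumes finite_\<Omega>: "finite \<Omega>" and u_in_G: "u \<in> G" and \<Delta>_moved: "\<Delta> \<subseteq> perm_supp u"
begin

definition conjugates :: "('a \<Rightarrow> 'a) set" where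
  "conjugates \<equiv> {g \<circ> u \<circ> inv g | g. g \<in> pw_stab G \<Delta>}"

lemma u_permutes: "u permutes \<Omega>"
  using group u_in_G by (auto simp: perm_group_def)

lemma \<Delta>_subset_\<Omega>: "\<Delta> \<subseteq> \<Omega>"
  using \<Delta>_moved perm_supp_subset[OF u_permutes] by blast

lemma finite_\<Delta>: "finite \<Delta>"
  using \<Delta>_subset_\<Omega> finite_\<Omega> finite_subset by blast

lemma card_\<Delta>_le: "card \<Delta> \<le> card (perm_supp u)"
  using \<Delta>_moved perm_supp_subset[OF u_permutes] finite_\<Omega> by (meson card_mono finite_subset)

lemma card_perm_supp_le: "card (perm_supp u) \<le> card \<Omega>"
  using perm_supp_subset[OF u_permutes] finite_\<Omega> by (rule card_mono[rotated])

lemma conj_in_conjugates: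
  assumes "h \<in> pw_stab G \<Delta>" "x \<in> conjugates"
  shows "h \<circ> x \<circ> inv h \<in> conjugates"
proof -
  obtain g where g: "g \<in> pw_stab G \<Delta>" "x = g \<circ> u \<circ> inv g"
    using assms(2) by (auto simp: conjugates_def)
  have "h \<circ> x \<circ> inv h = (h \<circ> g) \<circ> u \<circ> inv (h \<circ> g)"
    using g assms(1) pw_stab_bij by (simp add: o_inv_distrib o_assoc)
  then show ?thesis using pw_stab_comp[OF assms(1) g(1)] by (auto simp: conjugates_def)
qed

lemma conjugate_permutes: "x \<in> conjugates \<Longrightarrow> x permutes \<Omega>"
  using u_permutes pw_stab_permutes
  by (auto simp: conjugates_def intro!: permutes_compose permutes_inv)

lemma finite_conjugates: "finite conjugates"
proof -
  have "conjugates \<subseteq> {p. p permutes \<Omega>}" using conjugate_permutes by blast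
  then show ?thesis using finite_permutations[OF finite_\<Omega>] finite_subset by blast
qed

lemma perm_supp_conjugate:
  assumes "x \<in> conjugates"
  shows "card (perm_supp x) = card (perm_supp u)" and "\<Delta> \<subseteq> perm_supp x"
proof -
  obtain g where g: "g \<in> pw_stab G \<Delta>" "x = g \<circ> u \<circ> inv g"
    using assms by (auto simp: conjugates_def)
  then have supp: "perm_supp x = g ` perm_supp u"
    using perm_supp_conj pw_stab_bij by blast
  then show "card (perm_supp x) = card (perm_supp u)"
    using bij_is_inj[OF pw_stab_bij[OF g(1)]] by (simp add: card_image inj_on_subset)
  have "g ` \<Delta> = \<Delta>" using g(1) by (force simp: pw_stab_def)
  then show "\<Delta> \<subseteq> perm_supp x" using supp \<Delta>_moved by blast
qed

lemma card_fixed_points_conjugate: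
  assumes "x \<in> conjugates"
  shows "card {a \<in> \<Omega> - \<Delta>. x a = a} = card \<Omega> - card (perm_supp u)"
proof -
  have "{a \<in> \<Omega> - \<Delta>. x a = a} = \<Omega> - perm_supp x"
    using perm_supp_conjugate(2)[OF assms] by (auto simp: perm_supp_def)
  then show ?thesis
    using perm_supp_conjugate(1)[OF assms] perm_supp_subset[OF conjugate_permutes[OF assms]]
      finite_\<Omega> by (simp add: card_Diff_subset finite_subset)
qed

lemma card_moved_points_conjugate:
  assumes "x \<in> conjugates"
  shows "card {a \<in> \<Omega> - \<Delta>. x a \<noteq> a} = card (perm_supp u) - card \<Delta>"
proof -
  have "{a \<in> \<Omega> - \<Delta>. x a \<noteq> a} = perm_supp x - \<Delta>"
    using perm_supp_subset[OF conjugate_permutes[OF assms]] by (auto simp: perm_supp_def)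
  then show ?thesis
    using perm_supp_conjugate[OF assms] finite_\<Delta> by (simp add: card_Diff_subset)
qed

lemma card_preimage_singleton_conjugate:
  assumes "x \<in> conjugates" "\<Delta> = {\<alpha>}"
  shows "card {a \<in> \<Omega> - \<Delta>. x a \<in> \<Delta>} = 1"
proof -
  have x: "x permutes \<Omega>" using conjugate_permutes[OF assms(1)] .
  have "x \<alpha> \<noteq> \<alpha>" using perm_supp_conjugate(2)[OF assms(1)] assms(2) by (simp add: perm_supp_def)
  then have "inv x \<alpha> \<noteq> \<alpha>" by (metis x permutes_inverses(1))
  moreover have "inv x \<alpha> \<in> \<Omega>"
    using \<Delta>_subset_\<Omega> assms(2) permutes_in_image[OF permutes_inv[OF x]] by simp
  ultimately have "{a \<in> \<Omega> - \<Delta>. x a \<in> \<Delta>} = {inv x \<alpha>}"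
    using assms(2) x by (auto simp: permutes_inverses permutes_inv_eq)
  then show ?thesis by simp
qed

lemma card_conjugates_fixing:
  assumes "transitive_on (pw_stab G \<Delta>) (\<Omega> - \<Delta>)" "\<gamma> \<in> \<Omega> - \<Delta>"
  shows "real (card {x \<in> conjugates. x \<gamma> = \<gamma>}) = real (card conjugates)
      * (real (card \<Omega>) - real (card (perm_supp u))) / (real (card \<Omega>) - real (card \<Delta>))"
proof -
  have "real (card {x \<in> conjugates. x \<gamma> = \<gamma>})
      = real (card conjugates) * real (card \<Omega> - card (perm_supp u)) / real (card (\<Omega> - \<Delta>))"
  proof (rule card_filter_conj_invariant[where P = "\<lambda>x a. x a = a"])
    show "card {a \<in> \<Omega> - \<Delta>. x a = a} = card \<Omega> - card (perm_supp u)" if "x \<in> conjugates" for x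
      using that by (rule card_fixed_points_conjugate)
  qed (use assms finite_\<Omega> in \<open>auto simp: pw_stab_inv_apply
         intro: pw_stab_bij conj_in_conjugates finite_conjugates\<close>)
  then show ?thesis
    using \<Delta>_subset_\<Omega> finite_\<Delta> card_\<Delta>_le card_perm_supp_le by (simp add: card_Diff_subset of_nat_diff)
qed

lemma card_conjugates_moving:
  assumes "transitive_on (pw_stab G \<Delta>) (\<Omega> - \<Delta>)" "\<gamma> \<in> \<Omega> - \<Delta>"
  shows "real (card {x \<in> conjugates. x \<gamma> \<noteq> \<gamma>}) = real (card conjugates)
      * (real (card (perm_supp u)) - real (card \<Delta>)) / (real (card \<Omega>) - real (card \<Delta>))"
proof -
  have "real (card {x \<in> conjugates. x \<gamma> \<noteq> \<gamma>})
      = real (card conjugates) * real (card (perm_supp u) - card \<Delta>) / real (card (\<Omega> - \<Delta>))"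
  proof (rule card_filter_conj_invariant[where P = "\<lambda>x a. x a \<noteq> a"])
    show "card {a \<in> \<Omega> - \<Delta>. x a \<noteq> a} = card (perm_supp u) - card \<Delta>" if "x \<in> conjugates" for x
      using that by (rule card_moved_points_conjugate)
  qed (use assms finite_\<Omega> in \<open>auto simp: pw_stab_inv_apply pw_stab_inj inj_eq
         intro: pw_stab_bij conj_in_conjugates finite_conjugates\<close>)
  then show ?thesis
    using \<Delta>_subset_\<Omega> finite_\<Delta> card_\<Delta>_le card_perm_supp_le by (simp add: card_Diff_subset of_nat_diff)
qed

lemma real_card_Diff_insert:
  assumes "\<gamma> \<in> \<Omega> - \<Delta>"
  shows "real (card (\<Omega> - insert \<gamma> \<Delta>)) = real (card \<Omega>) - real (card \<Delta>) - 1"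
proof -
  have sub: "insert \<gamma> \<Delta> \<subseteq> \<Omega>" using assms \<Delta>_subset_\<Omega> by blast
  have card: "card (insert \<gamma> \<Delta>) = card \<Delta> + 1" using assms finite_\<Delta> by simp
  then have "card \<Delta> + 1 \<le> card \<Omega>" using card_mono[OF finite_\<Omega> sub] by simp
  then show ?thesis
    using sub card finite_\<Delta> by (simp add: card_Diff_subset of_nat_diff)
qed

lemma card_conjugates_fixing_moving:
  assumes trans_\<Delta>: "transitive_on (pw_stab G \<Delta>) (\<Omega> - \<Delta>)"
    and trans: "transitive_on (pw_stab G (insert \<gamma> \<Delta>)) (\<Omega> - insert \<gamma> \<Delta>)"
    and \<gamma>: "\<gamma> \<in> \<Omega> - \<Delta>" and \<delta>: "\<delta> \<in> \<Omega> - \<Delta>" "\<gamma> \<noteq> \<delta>"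
  shows "real (card {x \<in> conjugates. \<gamma> \<in> perm_fix \<Omega> x \<and> \<delta> \<in> perm_supp x})
    = real (card conjugates) * ((real (card \<Omega>) - real (card (perm_supp u)))
        * (real (card (perm_supp u)) - real (card \<Delta>)))
      / ((real (card \<Omega>) - real (card \<Delta>)) * (real (card \<Omega>) - real (card \<Delta>) - 1))"
proof -
  define F where "F = {x \<in> conjugates. x \<gamma> = \<gamma>}"
  have "real (card {x \<in> F. x \<delta> \<noteq> \<delta>})
      = real (card F) * real (card (perm_supp u) - card \<Delta>) / real (card (\<Omega> - insert \<gamma> \<Delta>))"
  proof (rule card_filter_conj_invariant[where P = "\<lambda>x a. x a \<noteq> a" and H = "pw_stab G (insert \<gamma> \<Delta>)"])
    show "finite F" using finite_conjugates by (simp add: F_def)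
    show "h \<circ> x \<circ> inv h \<in> F" if "h \<in> pw_stab G (insert \<gamma> \<Delta>)" "x \<in> F" for h x
      using that conj_in_conjugates pw_stab_antimono[of \<Delta> "insert \<gamma> \<Delta>"]
        pw_stab_conj_apply_fixed[of h "insert \<gamma> \<Delta>" \<gamma> x]
      by (auto simp: F_def pw_stab_def)
    show "card {a \<in> \<Omega> - insert \<gamma> \<Delta>. x a \<noteq> a} = card (perm_supp u) - card \<Delta>" if "x \<in> F" for x
    proof -
      have "{a \<in> \<Omega> - insert \<gamma> \<Delta>. x a \<noteq> a} = {a \<in> \<Omega> - \<Delta>. x a \<noteq> a}"
        using that by (auto simp: F_def)
      then show ?thesis using that card_moved_points_conjugate by (simp add: F_def)
    qed
  qed (use \<delta> trans finite_\<Omega> in \<open>auto simp: pw_stab_inv_apply pw_stab_inj inj_eq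
         intro: pw_stab_bij\<close>)
  moreover have "{x \<in> conjugates. \<gamma> \<in> perm_fix \<Omega> x \<and> \<delta> \<in> perm_supp x} = {x \<in> F. x \<delta> \<noteq> \<delta>}"
    using \<gamma> by (auto simp: F_def perm_fix_def perm_supp_def)
  ultimately show ?thesis
    using card_conjugates_fixing[OF trans_\<Delta> \<gamma>] real_card_Diff_insert[OF \<gamma>] card_\<Delta>_le
    by (simp add: F_def of_nat_diff)
qed

lemma card_conjugates_mapping_into:
  assumes trans: "transitive_on (pw_stab G \<Delta>) (\<Omega> - \<Delta>)"
    and "card \<Delta> = 1" and \<gamma>: "\<gamma> \<in> \<Omega> - \<Delta>"
  shows "real (card {x \<in> conjugates. x \<gamma> \<in> \<Delta>}) = real (card conjugates) * (1 / (real (card \<Omega>) - 1))"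
proof -
  obtain \<alpha> where \<alpha>: "\<Delta> = {\<alpha>}" using \<open>card \<Delta> = 1\<close> card_1_singletonE by blast
  have "real (card {x \<in> conjugates. x \<gamma> \<in> \<Delta>})
      = real (card conjugates) * real 1 / real (card (\<Omega> - \<Delta>))"
  proof (rule card_filter_conj_invariant[where P = "\<lambda>x a. x a \<in> \<Delta>"])
    show "card {a \<in> \<Omega> - \<Delta>. x a \<in> \<Delta>} = 1" if "x \<in> conjugates" for x
      using that \<alpha> by (rule card_preimage_singleton_conjugate)
  qed (use \<gamma> trans finite_\<Omega> in \<open>auto simp: pw_stab_inv_apply pw_stab_image_mem_iff
         intro: pw_stab_bij conj_in_conjugates finite_conjugates\<close>)
  moreover have "card \<Delta> \<le> card \<Omega>" using card_mono[OF finite_\<Omega> \<Delta>_subset_\<Omega>] .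
  ultimately show ?thesis
    using \<Delta>_subset_\<Omega> finite_\<Delta> \<open>card \<Delta> = 1\<close> by (simp add: card_Diff_subset of_nat_diff)
qed

lemma card_conjugates_mapping:
  assumes trans_\<Delta>: "transitive_on (pw_stab G \<Delta>) (\<Omega> - \<Delta>)"
    and trans: "transitive_on (pw_stab G (insert \<gamma> \<Delta>)) (\<Omega> - insert \<gamma> \<Delta>)"
    and "card \<Delta> = 1" and \<gamma>: "\<gamma> \<in> \<Omega> - \<Delta>" and \<delta>: "\<delta> \<in> \<Omega> - \<Delta>" "\<gamma> \<noteq> \<delta>"
  shows "real (card {x \<in> conjugates. x \<gamma> = \<delta>})
    = real (card conjugates) * ((real (card (perm_supp u)) - 2) / ((real (card \<Omega>) - 1) * (real (card \<Omega>) - 2)))"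
proof -
  define M where "M = {x \<in> conjugates. x \<gamma> \<notin> insert \<gamma> \<Delta>}"
  have "real (card {x \<in> M. x \<gamma> = \<delta>}) = real (card M) * real 1 / real (card (\<Omega> - insert \<gamma> \<Delta>))"
  proof (rule card_filter_conj_invariant[where P = "\<lambda>x a. x \<gamma> = a" and H = "pw_stab G (insert \<gamma> \<Delta>)"])
    show "finite M" using finite_conjugates by (simp add: M_def)
    show "h \<circ> x \<circ> inv h \<in> M" if h: "h \<in> pw_stab G (insert \<gamma> \<Delta>)" and x: "x \<in> M" for h x
    proof -
      have "(h \<circ> x \<circ> inv h) \<gamma> = h (x \<gamma>)" using pw_stab_conj_apply_fixed[OF h] by simp
      moreover have "h (x \<gamma>) \<notin> insert \<gamma> \<Delta>" using x pw_stab_image_mem_iff[OF h] by (simp add: M_def)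
      moreover have "h \<in> pw_stab G \<Delta>" using h pw_stab_antimono[of \<Delta> "insert \<gamma> \<Delta>" G] by blast
      then have "h \<circ> x \<circ> inv h \<in> conjugates" using x conj_in_conjugates by (simp add: M_def)
      ultimately show ?thesis by (simp add: M_def)
    qed
    show "(h \<circ> x \<circ> inv h) \<gamma> = h a" if "h \<in> pw_stab G (insert \<gamma> \<Delta>)" "x \<gamma> = a" for h x a
      using that pw_stab_conj_apply_fixed[of h "insert \<gamma> \<Delta>" \<gamma> x] by simp
    show "card {a \<in> \<Omega> - insert \<gamma> \<Delta>. x \<gamma> = a} = 1" if "x \<in> M" for x
    proof -
      have "x \<gamma> \<in> \<Omega>" using that \<gamma> conjugate_permutes permutes_in_image by (fastforce simp: M_def)
      then have "{a \<in> \<Omega> - insert \<gamma> \<Delta>. x \<gamma> = a} = {x \<gamma>}" using that by (auto simp: M_def)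
      then show ?thesis by simp
    qed
  qed (use \<delta> trans in \<open>auto simp: finite_\<Omega> intro: pw_stab_bij\<close>)
  moreover have "{x \<in> M. x \<gamma> = \<delta>} = {x \<in> conjugates. x \<gamma> = \<delta>}"
    using \<delta> by (auto simp: M_def)
  moreover have "real (card M)
      = real (card {x \<in> conjugates. x \<gamma> \<noteq> \<gamma>}) - real (card {x \<in> conjugates. x \<gamma> \<in> \<Delta>})"
  proof -
    have sub: "{x \<in> conjugates. x \<gamma> \<in> \<Delta>} \<subseteq> {x \<in> conjugates. x \<gamma> \<noteq> \<gamma>}" using \<gamma> by auto
    have "M = {x \<in> conjugates. x \<gamma> \<noteq> \<gamma>} - {x \<in> conjugates. x \<gamma> \<in> \<Delta>}" by (auto simp: M_def)
    then show ?thesis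
      using finite_conjugates by (simp add: card_Diff_subset[OF _ sub] card_mono[OF _ sub] of_nat_diff)
  qed
  moreover have "real (card (\<Omega> - insert \<gamma> \<Delta>)) = real (card \<Omega>) - 2"
    using real_card_Diff_insert[OF \<gamma>] \<open>card \<Delta> = 1\<close> by simp
  ultimately show ?thesis
    using card_conjugates_moving[OF trans_\<Delta> \<gamma>] card_conjugates_mapping_into[OF trans_\<Delta> \<open>card \<Delta> = 1\<close> \<gamma>]
      \<open>card \<Delta> = 1\<close> by (simp add: diff_divide_distrib[symmetric] algebra_simps)
qed

end

theorem lemma2p5:
  fixes \<Omega> :: "'a set" and G :: "('a \<Rightarrow> 'a) set" and u :: "'a \<Rightarrow> 'a"
    and \<Delta> :: "'a set" and t :: nat
  assumes "finite \<Omega>"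
    and "perm_group \<Omega> G"
    and "t_transitive t \<Omega> G" and "t \<ge> 2"
    and "u \<in> G"
    and "\<Delta> \<subseteq> perm_supp u"
  defines "n \<equiv> card \<Omega>" and "m \<equiv> card (perm_supp u)" and "d \<equiv> card \<Delta>"
    and "E \<equiv> {g \<circ> u \<circ> inv g | g. g \<in> pw_stab G \<Delta>}"
  shows
   "(d \<le> t - 1 \<longrightarrow> (\<forall>\<gamma>\<in>\<Omega> - \<Delta>.
        real (card {x \<in> E. x \<gamma> = \<gamma>}) = real (card E) * (real n - real m) / (real n - real d) \<and>
        real (card {x \<in> E. x \<gamma> \<noteq> \<gamma>}) = real (card E) * (real m - real d) / (real n - real d)))
    \<and> (d \<le> t - 2 \<longrightarrow> (\<forall>\<gamma>\<in>\<Omega> - \<Delta>. \<forall>\<delta>\<in>\<Omega> - \<Delta>. \<gamma> \<noteq> \<delta> \<longrightarrow>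
        real (card {x \<in> E. \<gamma> \<in> perm_fix \<Omega> x \<and> \<delta> \<in> perm_supp x}) =
          real (card E) * ((real n - real m) * (real m - real d))
            / ((real n - real d) * (real n - real d - 1))))
    \<and> (d = 1 \<longrightarrow> (\<forall>\<gamma>\<in>\<Omega> - \<Delta>.
        real (card {x \<in> E. x \<gamma> \<in> \<Delta>}) = real (card E) * (1 / (real n - 1))))
    \<and> (d = 1 \<and> t \<ge> 3 \<longrightarrow> (\<forall>\<gamma>\<in>\<Omega> - \<Delta>. \<forall>\<delta>\<in>\<Omega> - \<Delta>. \<gamma> \<noteq> \<delta> \<longrightarrow>
        real (card {x \<in> E. x \<gamma> = \<delta>}) = real (card E) * ((real m - 2) / ((real n - 1) * (real n - 2)))))"
proof -
  interpret stabilizer_conjugates \<Omega> G u \<Delta>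
    using assms by unfold_locales
  have E: "E = conjugates" by (simp add: E_def conjugates_def)
  have trans: "transitive_on (pw_stab G D) (\<Omega> - D)" if "D \<subseteq> \<Omega>" "card D < t" for D
    using transitive_on_pw_stab[OF assms(1,3) that] .
  have trans_\<Delta>: "transitive_on (pw_stab G \<Delta>) (\<Omega> - \<Delta>)" if "d \<le> t - 1"
    using trans[OF \<Delta>_subset_\<Omega>] that \<open>t \<ge> 2\<close> by (simp add: d_def)
  have trans_insert: "transitive_on (pw_stab G (insert \<gamma> \<Delta>)) (\<Omega> - insert \<gamma> \<Delta>)"
    if "\<gamma> \<in> \<Omega> - \<Delta>" "d + 1 < t" for \<gamma>
    using trans[of "insert \<gamma> \<Delta>"] that \<Delta>_subset_\<Omega> finite_\<Delta> by (simp add: d_def)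
  show ?thesis
    unfolding E n_def m_def d_def
    using card_conjugates_fixing card_conjugates_moving card_conjugates_fixing_moving
      card_conjugates_mapping_into card_conjugates_mapping
      trans_\<Delta> trans_insert \<open>t \<ge> 2\<close> by (simp add: d_def)
qed

end
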